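(* Let $R$ be a commutative ring endowed with a translation-invariant partial order $\le$ on its additive group such that $R^+$ is closed under multiplication. If $R$ is archimedean and localizable, then $r^2\in R^+$ for all $r\in R$ (so $R$ is a partially ordered commutative ring).
   Context: Rings are commutative with unit $1$; $\mathbb{N}=\{1,2,\dots\}$. Translation-invariant means $r\le s$ implies $r+t\le s+t$; $R^+=\{r:0\le r\}$. A partially ordered commutative ring is such a ring whose positive cone is closed under multiplication and contains all squares. $R$ is archimedean if whenever $g,h\in R$ satisfy $kg+h\in R^+$ for all $k\in\mathbb{N}$, then $g\in R^+$. $\mathrm{Loc}(R)$ is the set of $s\in 1+R^+$ such that for all $r\in R$, $rs\in R^+$ implies $r\in R^+$. $R$ is localizable if for every $r\in R$ there exists $s\in\mathrm{Loc}(R)$ with $-s\le r\le s$. *)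

theory Defs
  imports Main
begin

definition trans_inv_porder :: "('a::comm_ring_1 \<Rightarrow> 'a \<Rightarrow> bool) \<Rightarrow> bool" where
  "trans_inv_porder le \<longleftrightarrow> reflp le \<and> transp le \<and> antisymp le \<and>
     (\<forall>r s t. le r s \<longrightarrow> le (r + t) (s + t))"

definition pos_cone :: "('a::comm_ring_1 \<Rightarrow> 'a \<Rightarrow> bool) \<Rightarrow> 'a set" where
  "pos_cone le = {r. le 0 r}"

definition archimedean_ord :: "('a::comm_ring_1 \<Rightarrow> 'a \<Rightarrow> bool) \<Rightarrow> bool" where
  "archimedean_ord le \<longleftrightarrow>
     (\<forall>g h. (\<forall>k::nat. k \<ge> 1 \<longrightarrow> of_nat k * g + h \<in> pos_cone le) \<longrightarrow> g \<in> pos_cone le)"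

definition Loc :: "('a::comm_ring_1 \<Rightarrow> 'a \<Rightarrow> bool) \<Rightarrow> 'a set" where
  "Loc le = {s. (\<exists>p\<in>pos_cone le. s = 1 + p) \<and>
                 (\<forall>r. r * s \<in> pos_cone le \<longrightarrow> r \<in> pos_cone le)}"

definition localizable :: "('a::comm_ring_1 \<Rightarrow> 'a \<Rightarrow> bool) \<Rightarrow> bool" where
  "localizable le \<longleftrightarrow> (\<forall>r. \<exists>s\<in>Loc le. le (- s) r \<and> le r s)"

end

theory Submission
  imports Defs
begin

text \<open>Given r, pick s \<in> Loc with -s \<le> r \<le> s, so that a = s + r and b = s - r are positive.
Weighting every n-step \<plusminus>1 walk by a^(up steps) b^(down steps) times the square of its endpoint
gives a positive element; by the second-moment computation for such walks, multiplied by
(a + b)^2 it equals (a + b)^n (n (a + b)^2 + n (n - 1) (a - b)^2) = 2^(n+2) n s^n (s^2 + (n - 1) r^2).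
Cancelling the localizing factor s^n and then the integer factor (the latter via the
archimedean property) yields k r^2 + s^2 \<ge> 0 for every k \<ge> 1, hence r^2 \<ge> 0.\<close>

context
  fixes le :: "'a::comm_ring_1 \<Rightarrow> 'a \<Rightarrow> bool"
  assumes order: "trans_inv_porder le"
begin

lemma le_iff_diff_in_pos_cone: "le x y \<longleftrightarrow> y - x \<in> pos_cone le"
proof
  assume "le x y"
  then have "le (x - x) (y - x)"
    using order by (simp only: trans_inv_porder_def diff_conv_add_uminus)
  then show "y - x \<in> pos_cone le"
    by (simp add: pos_cone_def)
next
  assume "y - x \<in> pos_cone le"
  then have "le (0 + x) (y - x + x)"
    using order by (simp only: trans_inv_porder_def pos_cone_def mem_Collect_eq)
  then show "le x y" by simp
qed

lemma zero_in_pos_cone: "0 \<in> pos_cone le"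
  using order unfolding trans_inv_porder_def pos_cone_def by (blast dest: reflpD)

lemma pos_cone_add:
  assumes "x \<in> pos_cone le" "y \<in> pos_cone le"
  shows "x + y \<in> pos_cone le"
proof -
  have "le 0 y" "le y (x + y)"
    using assms le_iff_diff_in_pos_cone[of y "x + y"] by (simp_all add: pos_cone_def)
  then have "le 0 (x + y)"
    using order unfolding trans_inv_porder_def by (blast dest: transpD)
  then show ?thesis
    by (simp add: pos_cone_def)
qed

lemma of_nat_mult_in_pos_cone: "x \<in> pos_cone le \<Longrightarrow> of_nat n * x \<in> pos_cone le"
  by (induction n) (simp_all add: zero_in_pos_cone pos_cone_add algebra_simps)

lemma Loc_subset_pos_cone:
  assumes "1 \<in> pos_cone le"
  shows "Loc le \<subseteq> pos_cone le"
  using assms pos_cone_add by (auto simp: Loc_def)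

end

lemma Loc_power_cancel:
  assumes "s \<in> Loc le" "s ^ n * x \<in> pos_cone le"
  shows "x \<in> pos_cone le"
  using assms(2)
proof (induction n arbitrary: x)
  case (Suc n)
  have "s ^ n * (x * s) \<in> pos_cone le"
    using Suc.prems by (simp add: ac_simps)
  then have "x * s \<in> pos_cone le"
    by (rule Suc.IH)
  then show ?case
    using assms(1) by (simp add: Loc_def)
qed simp

lemma one_in_pos_cone_if_localizable:
  assumes "localizable le"
  shows "1 \<in> pos_cone le"
proof -
  obtain s where "s \<in> Loc le" "le 0 s"
    using assms by (simp add: localizable_def) blast
  then show ?thesis
    by (simp add: Loc_def pos_cone_def)
qed

lemma of_nat_in_pos_cone:
  "trans_inv_porder le \<Longrightarrow> localizable le \<Longrightarrow> of_nat n \<in> pos_cone le"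
  using of_nat_mult_in_pos_cone[of le 1 n] one_in_pos_cone_if_localizable[of le] by simp

lemma pos_cone_of_nat_mult_cancel:
  assumes order: "trans_inv_porder le" and arch: "archimedean_ord le"
    and loc: "localizable le"
    and m: "m \<ge> 1" and mw: "of_nat m * w \<in> pos_cone le"
  shows "w \<in> pos_cone le"
proof -
  obtain t where t: "t \<in> Loc le" "le (- t) w"
    using loc by (force simp: localizable_def)
  have tP: "t \<in> pos_cone le"
    using t(1) Loc_subset_pos_cone[OF order one_in_pos_cone_if_localizable[OF loc]] by blast
  have twP: "t + w \<in> pos_cone le"
    using t(2) le_iff_diff_in_pos_cone[OF order] by (simp add: add.commute)
  have "of_nat k * w + of_nat m * t \<in> pos_cone le" for k
  proof -
    define q where "q = k div m"
    define \<rho> where "\<rho> = k mod m"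
    have k: "k = q * m + \<rho>" and "\<rho> \<le> m"
      using m by (simp_all add: q_def \<rho>_def less_imp_le)
    then have "of_nat k * w + of_nat m * t
        = of_nat q * (of_nat m * w) + (of_nat \<rho> * (t + w) + of_nat (m - \<rho>) * t)"
      by (simp add: k of_nat_diff algebra_simps)
    also have "\<dots> \<in> pos_cone le"
      by (intro pos_cone_add[OF order] of_nat_mult_in_pos_cone[OF order] mw twP tP)
    finally show ?thesis .
  qed
  then show ?thesis
    using arch unfolding archimedean_ord_def by blast
qed

text \<open>The sum, over all n-step \<plusminus>1 walks starting at d, of a^(up steps) b^(down steps) times
the square of the endpoint.\<close>

fun walk_square_sum :: "'a::comm_ring_1 \<Rightarrow> 'a \<Rightarrow> nat \<Rightarrow> int \<Rightarrow> 'a" where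
  "walk_square_sum a b 0 d = of_int (d * d)"
| "walk_square_sum a b (Suc n) d =
     a * walk_square_sum a b n (d + 1) + b * walk_square_sum a b n (d - 1)"

lemma walk_square_sum_closed_form:
  "(a + b)^2 * walk_square_sum a b n d = (a + b)^n * (of_int d * of_int d * (a + b)^2
     + 2 * of_int d * of_nat n * (a - b) * (a + b) + of_nat n * (a + b)^2
     + of_nat n * (of_nat n - 1) * (a - b)^2)"
proof (induction n arbitrary: d)
  case (Suc n)
  have "(a + b)^2 * walk_square_sum a b (Suc n) d
      = a * ((a + b)^2 * walk_square_sum a b n (d + 1))
        + b * ((a + b)^2 * walk_square_sum a b n (d - 1))"
    by (simp add: algebra_simps)
  then show ?case
    unfolding Suc.IH by (simp add: algebra_simps power2_eq_square)
qed (simp add: algebra_simps)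

lemma walk_square_sum_centered:
  assumes "a + b = 2 * s" "a - b = 2 * r"
  shows "(a + b)^2 * walk_square_sum a b (Suc k) 0
    = s ^ Suc k * (of_nat (4 * Suc k * 2 ^ Suc k) * (of_nat k * (r * r) + s * s))"
  using walk_square_sum_closed_form[of a b "Suc k" 0] unfolding assms
  by (simp add: algebra_simps power2_eq_square power_mult_distrib del: walk_square_sum.simps)

lemma walk_square_sum_in_pos_cone:
  assumes "trans_inv_porder le" "localizable le"
    and "\<forall>x\<in>pos_cone le. \<forall>y\<in>pos_cone le. x * y \<in> pos_cone le"
    and "a \<in> pos_cone le" "b \<in> pos_cone le"
  shows "walk_square_sum a b n d \<in> pos_cone le"
proof (induction n arbitrary: d)
  case 0
  have "walk_square_sum a b 0 d = of_nat (nat (d * d))"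
    by simp
  then show ?case
    using of_nat_in_pos_cone[OF assms(1,2)] by metis
next
  case (Suc n)
  then show ?case
    using assms(3-5) pos_cone_add[OF assms(1)] by simp
qed

lemma of_nat_mult_square_add_square_in_pos_cone:
  fixes le :: "'a::comm_ring_1 \<Rightarrow> 'a \<Rightarrow> bool"
  assumes order: "trans_inv_porder le"
    and mult: "\<forall>x\<in>pos_cone le. \<forall>y\<in>pos_cone le. x * y \<in> pos_cone le"
    and arch: "archimedean_ord le" and loc: "localizable le"
    and s: "s \<in> Loc le" "le (- s) r" "le r s"
  shows "of_nat k * (r * r) + s * s \<in> pos_cone le"
proof -
  define a b where "a = s + r" and "b = s - r"
  have a: "a \<in> pos_cone le" and b: "b \<in> pos_cone le"
    using s(2,3) le_iff_diff_in_pos_cone[OF order] by (simp_all add: a_def b_def add.commute)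
  have "a + b \<in> pos_cone le"
    using a b by (rule pos_cone_add[OF order])
  have "s ^ Suc k * (of_nat (4 * Suc k * 2 ^ Suc k) * (of_nat k * (r * r) + s * s))
      = (a + b)^2 * walk_square_sum a b (Suc k) 0"
    by (rule walk_square_sum_centered[symmetric]) (simp_all add: a_def b_def)
  also have "\<dots> \<in> pos_cone le"
    unfolding power2_eq_square
    using \<open>a + b \<in> pos_cone le\<close> walk_square_sum_in_pos_cone[OF order loc mult a b] mult
    by blast
  finally have "s ^ Suc k * (of_nat (4 * Suc k * 2 ^ Suc k) * (of_nat k * (r * r) + s * s))
      \<in> pos_cone le" .
  then have "of_nat (4 * Suc k * 2 ^ Suc k) * (of_nat k * (r * r) + s * s) \<in> pos_cone le"
    using Loc_power_cancel s(1) by blast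
  then show ?thesis
    by (rule pos_cone_of_nat_mult_cancel[OF order arch loc, rotated]) simp
qed

theorem proposition4:
  fixes le :: "'a::comm_ring_1 \<Rightarrow> 'a \<Rightarrow> bool"
  assumes "trans_inv_porder le"
    and "\<forall>a\<in>pos_cone le. \<forall>b\<in>pos_cone le. a * b \<in> pos_cone le"
    and "archimedean_ord le"
    and "localizable le"
  shows "\<forall>r. r * r \<in> pos_cone le"
proof
  fix r :: 'a
  obtain s where "s \<in> Loc le" "le (- s) r" "le r s"
    using assms(4) by (force simp: localizable_def)
  then have "\<forall>k::nat. k \<ge> 1 \<longrightarrow> of_nat k * (r * r) + s * s \<in> pos_cone le"
    using of_nat_mult_square_add_square_in_pos_cone[OF assms] by blast
  then show "r * r \<in> pos_cone le"
    using assms(3) unfolding archimedean_ord_def by blast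
qed

end
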